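(* Let $k\ge 1$ and let $Q_k$ be the hypercube of dimension $k$. For any two vertices $u$ and $v$ of $Q_k$, perfect state transfer from $u$ to $v$ is possible by a single CQC-hopping; that is, there exist a spanning subgraph $H$ of $Q_k$ (with $V(H)=V(Q_k)$ and $E(H)\subseteq E(Q_k)$) and a time $t_0>0$ such that $|\langle v|\exp(-it_0A(H))|u\rangle|=1$.
   Context: The hypercube $Q_k$ is the graph with vertex set $\{0,1\}^k$, two vertices being adjacent if and only if their labels have Hamming distance $1$. For a graph $H$ with adjacency matrix $A(H)$, associate to each vertex $x$ the standard basis vector $|x\rangle\in\mathbb{C}^{|V(H)|}$; $H$ has perfect state transfer from $a$ to $b$ at time $t_0$ if $|\langle b|\exp(-it_0A(H))|a\rangle|=1$. A CQC-hopping from $u$ to $v$ on a graph $G$ consists of switching off a set of edges of $G$ to obtain a spanning subgraph $H$ (same vertex set, subset of the edges), performing perfect state transfer from $u$ to $v$ in $H$, and then switching the removed edges back on. *)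

theory Defs
  imports "HOL-Analysis.Analysis"
begin

definition hcube_vertices :: "nat \<Rightarrow> bool list set" where
  "hcube_vertices k = {x. length x = k}"

definition hamming :: "bool list \<Rightarrow> bool list \<Rightarrow> nat" where
  "hamming x y = card {i. i < length x \<and> x ! i \<noteq> y ! i}"

definition hcube_adj :: "nat \<Rightarrow> bool list \<Rightarrow> bool list \<Rightarrow> bool" where
  "hcube_adj k x y \<longleftrightarrow> x \<in> hcube_vertices k \<and> y \<in> hcube_vertices k \<and> hamming x y = 1"

text \<open>A spanning subgraph of Q_k: same vertex set, a symmetric edge relation whose
  edges are edges of Q_k.\<close>
definition spanning_subgraph_hcube :: "nat \<Rightarrow> (bool list \<Rightarrow> bool list \<Rightarrow> bool) \<Rightarrow> bool" where
  "spanning_subgraph_hcube k E \<longleftrightarrow>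
     (\<forall>x y. E x y \<longrightarrow> E y x) \<and> (\<forall>x y. E x y \<longrightarrow> hcube_adj k x y)"

definition adj_matrix :: "('a \<Rightarrow> 'a \<Rightarrow> bool) \<Rightarrow> 'a \<Rightarrow> 'a \<Rightarrow> complex" where
  "adj_matrix E x y = (if E x y then 1 else 0)"

fun mat_pow :: "'a set \<Rightarrow> ('a \<Rightarrow> 'a \<Rightarrow> complex) \<Rightarrow> nat \<Rightarrow> 'a \<Rightarrow> 'a \<Rightarrow> complex" where
  "mat_pow V M 0 x y = (if x = y then 1 else 0)"
| "mat_pow V M (Suc n) x y = (\<Sum>z\<in>V. M x z * mat_pow V M n z y)"

text \<open>Entry (b,a) of the matrix exponential exp(c M) = sum_n c^n M^n / n!, i.e. <b| exp(c M) |a>.\<close>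
definition mat_exp_entry :: "'a set \<Rightarrow> complex \<Rightarrow> ('a \<Rightarrow> 'a \<Rightarrow> complex) \<Rightarrow> 'a \<Rightarrow> 'a \<Rightarrow> complex" where
  "mat_exp_entry V c M b a = (\<Sum>n. (c ^ n / of_nat (fact n)) * mat_pow V M n b a)"

definition pst :: "'a set \<Rightarrow> ('a \<Rightarrow> 'a \<Rightarrow> bool) \<Rightarrow> 'a \<Rightarrow> 'a \<Rightarrow> real \<Rightarrow> bool" where
  "pst V E a b t0 \<longleftrightarrow> cmod (mat_exp_entry V (- \<i> * of_real t0) (adj_matrix E) b a) = 1"

end

theory Submission
  imports Defs
begin

(* Let D be the set of coordinates in which u and v differ and keep only the edges of Q_k
   in directions from D.  The component of u is then a copy of Q_|D| in which v is antipodal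
   to u.  For s \<subseteq> D the characters x \<mapsto> (-1)^|{j \<in> s. x_j \<noteq> u_j}|, supported on that
   component, are eigenvectors with eigenvalue |D| - 2|s| and sum to 2^|D| times the
   indicator of u.  Hence <v|exp(-itA)|u> = 2^-|D| \<Sum>_s exp(-it(|D| - 2|s|)) (-1)^|s|,
   and at t = pi/2 every summand equals (-i)^|D|. *)

lemma mat_pow_eigen_expansion:
  fixes M :: "'a \<Rightarrow> 'a \<Rightarrow> complex" and \<phi> :: "'s \<Rightarrow> 'a \<Rightarrow> complex"
  assumes eigen: "\<And>s x. s \<in> S \<Longrightarrow> x \<in> V \<Longrightarrow> (\<Sum>y\<in>V. M x y * \<phi> s y) = \<mu> s * \<phi> s x"
    and unit: "\<And>x. x \<in> V \<Longrightarrow> (if x = a then 1 else 0) = (\<Sum>s\<in>S. w s * \<phi> s x)"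
    and "x \<in> V"
  shows "mat_pow V M n x a = (\<Sum>s\<in>S. w s * \<phi> s x * \<mu> s ^ n)"
  using \<open>x \<in> V\<close>
proof (induction n arbitrary: x)
  case 0
  then show ?case using unit by simp
next
  case (Suc n)
  have "mat_pow V M (Suc n) x a = (\<Sum>z\<in>V. M x z * (\<Sum>s\<in>S. w s * \<phi> s z * \<mu> s ^ n))"
    using Suc.IH by simp
  also have "\<dots> = (\<Sum>s\<in>S. \<Sum>z\<in>V. M x z * (w s * \<phi> s z * \<mu> s ^ n))"
    by (simp add: sum_distrib_left sum.swap[of _ V])
  also have "\<dots> = (\<Sum>s\<in>S. w s * \<mu> s ^ n * (\<Sum>z\<in>V. M x z * \<phi> s z))"
    by (simp add: sum_distrib_left ac_simps)
  also have "\<dots> = (\<Sum>s\<in>S. w s * \<phi> s x * \<mu> s ^ Suc n)"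
    using eigen Suc.prems by (intro sum.cong) auto
  finally show ?case .
qed

lemma mat_exp_entry_eigen_expansion:
  assumes "finite S" and "\<And>n. mat_pow V M n b a = (\<Sum>s\<in>S. w s * \<mu> s ^ n)"
  shows "mat_exp_entry V c M b a = (\<Sum>s\<in>S. w s * exp (c * \<mu> s))"
proof -
  have exp_sums: "(\<lambda>n. z ^ n / of_nat (fact n)) sums exp z" for z :: complex
    using exp_converges[of z] by (simp add: scaleR_conv_of_real field_simps)
  have "(\<lambda>n. \<Sum>s\<in>S. w s * ((c * \<mu> s) ^ n / of_nat (fact n))) sums (\<Sum>s\<in>S. w s * exp (c * \<mu> s))"
    by (intro sums_sum sums_mult exp_sums)
  then show ?thesis
    unfolding mat_exp_entry_def assms(2)
    by (simp add: sums_iff sum_distrib_left power_mult_distrib ac_simps)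
qed

lemma hamming_commute: "length x = length y \<Longrightarrow> hamming x y = hamming y x"
  unfolding hamming_def by metis

lemma finite_hcube_vertices: "finite (hcube_vertices k)"
  using finite_lists_length_eq[of "UNIV :: bool set" k] by (simp add: hcube_vertices_def)

definition flip_coord :: "bool list \<Rightarrow> nat \<Rightarrow> bool list" where
  "flip_coord x i = x[i := \<not> x ! i]"

lemma length_flip_coord [simp]: "length (flip_coord x i) = length x"
  by (simp add: flip_coord_def)

lemma nth_flip_coord: "i < length x \<Longrightarrow> flip_coord x i ! j = (if j = i then \<not> x ! i else x ! j)"
  by (simp add: flip_coord_def nth_list_update)

lemma inj_on_flip_coord: "inj_on (flip_coord x) {..<length x}"
  by (rule inj_onI) (metis lessThan_iff nth_flip_coord)

lemma hamming_eq_1_iff_flip_coord: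
  assumes "length y = length x"
  shows "hamming x y = 1 \<longleftrightarrow> (\<exists>i<length x. y = flip_coord x i)"
proof
  assume "hamming x y = 1"
  then obtain i where "{j. j < length x \<and> x ! j \<noteq> y ! j} = {i}"
    unfolding hamming_def by (auto simp: card_1_singleton_iff)
  then have "i < length x" and "x ! i \<noteq> y ! i"
    and "\<And>j. j < length x \<Longrightarrow> j \<noteq> i \<Longrightarrow> x ! j = y ! j"
    by blast+
  then have "y = flip_coord x i"
    using assms by (intro nth_equalityI) (auto simp: nth_flip_coord)
  with \<open>i < length x\<close> show "\<exists>i<length x. y = flip_coord x i" by blast
next
  assume "\<exists>i<length x. y = flip_coord x i"
  then obtain i where "i < length x" and "y = flip_coord x i" by blast
  then have "{j. j < length x \<and> x ! j \<noteq> y ! j} = {i}"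
    by (auto simp: nth_flip_coord)
  then show "hamming x y = 1" by (simp add: hamming_def)
qed

definition subcube_edges :: "nat \<Rightarrow> nat set \<Rightarrow> bool list \<Rightarrow> bool list \<Rightarrow> bool" where
  "subcube_edges k D x y \<longleftrightarrow> hcube_adj k x y \<and> (\<forall>i<k. x ! i \<noteq> y ! i \<longrightarrow> i \<in> D)"

lemma spanning_subgraph_subcube_edges: "spanning_subgraph_hcube k (subcube_edges k D)"
  unfolding spanning_subgraph_hcube_def subcube_edges_def hcube_adj_def hcube_vertices_def
  by (auto simp: hamming_commute)

lemma subcube_neighbours:
  assumes "x \<in> hcube_vertices k" and "D \<subseteq> {..<k}"
  shows "{y \<in> hcube_vertices k. subcube_edges k D x y} = flip_coord x ` D"
proof -
  have "length x = k" using assms(1) by (simp add: hcube_vertices_def)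
  have edge_iff: "subcube_edges k D x (flip_coord x i) \<longleftrightarrow> i \<in> D" if "i < k" for i
    using that assms \<open>length x = k\<close> hamming_eq_1_iff_flip_coord[of "flip_coord x i" x]
    by (auto simp: subcube_edges_def hcube_adj_def hcube_vertices_def nth_flip_coord)
  have "\<exists>i<k. y = flip_coord x i" if "subcube_edges k D x y" for y
    using that hamming_eq_1_iff_flip_coord[of y x]
    by (auto simp: subcube_edges_def hcube_adj_def hcube_vertices_def)
  then show ?thesis
    using edge_iff assms(2) \<open>length x = k\<close> by (force simp: hcube_vertices_def)
qed

definition subcube_character :: "nat \<Rightarrow> bool list \<Rightarrow> nat set \<Rightarrow> nat set \<Rightarrow> bool list \<Rightarrow> complex" where
  "subcube_character k u D s x =
     (if x \<in> hcube_vertices k \<and> (\<forall>i<k. i \<notin> D \<longrightarrow> x ! i = u ! i)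
      then \<Prod>j\<in>s. if x ! j = u ! j then 1 else -1 else 0)"

lemma subcube_character_flip_coord:
  assumes "x \<in> hcube_vertices k" and "i \<in> D" and "D \<subseteq> {..<k}" and "s \<subseteq> D"
  shows "subcube_character k u D s (flip_coord x i)
           = (if i \<in> s then -1 else 1) * subcube_character k u D s x"
proof -
  have "i < length x" using assms(1-3) by (auto simp: hcube_vertices_def)
  have "finite s" using assms(3,4) by (meson finite_lessThan finite_subset subset_trans)
  have outside_D: "(\<forall>j<k. j \<notin> D \<longrightarrow> flip_coord x i ! j = u ! j) \<longleftrightarrow> (\<forall>j<k. j \<notin> D \<longrightarrow> x ! j = u ! j)"
    using assms(2) \<open>i < length x\<close> by (auto simp: nth_flip_coord)
  have "(if flip_coord x i ! j = u ! j then 1 else -1 :: complex)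
          = (if j = i then -1 else 1) * (if x ! j = u ! j then 1 else -1)" for j
    using \<open>i < length x\<close> by (auto simp: nth_flip_coord)
  then have "(\<Prod>j\<in>s. if flip_coord x i ! j = u ! j then 1 else -1 :: complex)
          = (\<Prod>j\<in>s. if j = i then -1 else 1) * (\<Prod>j\<in>s. if x ! j = u ! j then 1 else -1)"
    by (simp add: prod.distrib)
  also have "(\<Prod>j\<in>s. if j = i then -1 else 1 :: complex) = (if i \<in> s then -1 else 1)"
    using \<open>finite s\<close> by (simp add: prod.delta)
  finally show ?thesis
    unfolding subcube_character_def using outside_D assms(1) by (auto simp: hcube_vertices_def)
qed

lemma subcube_character_eigenvector:
  assumes "x \<in> hcube_vertices k" and "D \<subseteq> {..<k}" and "s \<subseteq> D"
  shows "(\<Sum>y\<in>hcube_vertices k. adj_matrix (subcube_edges k D) x y * subcube_character k u D s y)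
           = (of_nat (card D) - 2 * of_nat (card s)) * subcube_character k u D s x"
proof -
  have "finite D" using assms(2) by (meson finite_lessThan finite_subset)
  have "inj_on (flip_coord x) D"
    using assms(1,2) by (intro inj_on_subset[OF inj_on_flip_coord]) (simp add: hcube_vertices_def)
  have "(\<Sum>y\<in>hcube_vertices k. adj_matrix (subcube_edges k D) x y * subcube_character k u D s y)
          = (\<Sum>y\<in>{y \<in> hcube_vertices k. subcube_edges k D x y}. subcube_character k u D s y)"
    unfolding sum.inter_filter[OF finite_hcube_vertices] adj_matrix_def by (rule sum.cong) auto
  also have "\<dots> = (\<Sum>i\<in>D. subcube_character k u D s (flip_coord x i))"
    using \<open>inj_on (flip_coord x) D\<close> by (simp add: subcube_neighbours[OF assms(1,2)] sum.reindex)
  also have "\<dots> = (\<Sum>i\<in>D. if i \<in> s then -1 else 1) * subcube_character k u D s x"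
    using subcube_character_flip_coord[OF assms(1) _ assms(2,3)] by (simp add: sum_distrib_right)
  also have "(\<Sum>i\<in>D. if i \<in> s then -1 else 1 :: complex) = of_nat (card D) - 2 * of_nat (card s)"
  proof -
    have "finite s" using \<open>finite D\<close> assms(3) finite_subset by blast
    have "(\<Sum>i\<in>D. if i \<in> s then -1 else 1 :: complex) = of_nat (card (D - s)) - of_nat (card s)"
      using \<open>finite D\<close> assms(3) by (simp add: sum.If_cases Int_absorb1 Diff_eq)
    also have "card (D - s) = card D - card s"
      using \<open>finite s\<close> assms(3) by (rule card_Diff_subset)
    finally show ?thesis
      using card_mono[OF \<open>finite D\<close> assms(3)] by (simp add: of_nat_diff)
  qed
  finally show ?thesis .
qed

lemma sum_subcube_characters:
  assumes "u \<in> hcube_vertices k" and "x \<in> hcube_vertices k" and "D \<subseteq> {..<k}"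
  shows "(\<Sum>s\<in>Pow D. subcube_character k u D s x) = (if x = u then 2 ^ card D else 0)"
proof (cases "\<forall>i<k. i \<notin> D \<longrightarrow> x ! i = u ! i")
  case False
  then have "x \<noteq> u" and "subcube_character k u D s x = 0" for s
    by (auto simp: subcube_character_def)
  then show ?thesis by simp
next
  case agree_outside: True
  have "finite D" using assms(3) by (meson finite_lessThan finite_subset)
  have "(\<Sum>s\<in>Pow D. subcube_character k u D s x)
          = (\<Sum>s\<in>Pow D. \<Prod>j\<in>s. if x ! j = u ! j then 1 else -1)"
    using agree_outside assms(2) by (simp add: subcube_character_def)
  also have "\<dots> = (\<Prod>j\<in>D. (if x ! j = u ! j then 1 else -1) + 1)"
    by (simp add: prod_add[OF \<open>finite D\<close>])
  also have "\<dots> = (if x = u then 2 ^ card D else 0)"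
  proof (cases "x = u")
    case False
    have "length x = k" and "length u = k" using assms(1,2) by (auto simp: hcube_vertices_def)
    with False have "\<not> (\<forall>j<k. x ! j = u ! j)"
      using nth_equalityI[of x u] by auto
    then obtain j where "j < k" and "x ! j \<noteq> u ! j" by blast
    with agree_outside have "j \<in> D" by blast
    with \<open>x ! j \<noteq> u ! j\<close> False show ?thesis
      by (auto intro!: prod_zero \<open>finite D\<close>)
  qed simp
  finally show ?thesis .
qed

lemma mat_exp_entry_subcube_edges:
  assumes "u \<in> hcube_vertices k" and "v \<in> hcube_vertices k" and "D \<subseteq> {..<k}"
  shows "mat_exp_entry (hcube_vertices k) c (adj_matrix (subcube_edges k D)) v u
           = (\<Sum>s\<in>Pow D. subcube_character k u D s v
                * exp (c * (of_nat (card D) - 2 * of_nat (card s)))) / 2 ^ card D"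
proof -
  have "finite D" using assms(3) by (meson finite_lessThan finite_subset)
  have eigen: "\<And>s x. s \<in> Pow D \<Longrightarrow> x \<in> hcube_vertices k \<Longrightarrow>
      (\<Sum>y\<in>hcube_vertices k. adj_matrix (subcube_edges k D) x y * subcube_character k u D s y)
        = (of_nat (card D) - 2 * of_nat (card s)) * subcube_character k u D s x"
    using subcube_character_eigenvector assms(3) by blast
  have unit: "\<And>x. x \<in> hcube_vertices k \<Longrightarrow>
      (if x = u then 1 else 0) = (\<Sum>s\<in>Pow D. 1 / 2 ^ card D * subcube_character k u D s x)"
    using sum_subcube_characters[OF assms(1) _ assms(3)] by (simp flip: sum_divide_distrib)
  have "mat_exp_entry (hcube_vertices k) c (adj_matrix (subcube_edges k D)) v u
          = (\<Sum>s\<in>Pow D. 1 / 2 ^ card D * subcube_character k u D s v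
               * exp (c * (of_nat (card D) - 2 * of_nat (card s))))"
    using mat_pow_eigen_expansion[OF eigen unit assms(2)] \<open>finite D\<close>
    by (intro mat_exp_entry_eigen_expansion) auto
  then show ?thesis by (simp add: sum_divide_distrib)
qed

lemma subcube_edges_antipodal_transfer:
  assumes "u \<in> hcube_vertices k" and "v \<in> hcube_vertices k"
  defines "D \<equiv> {i. i < k \<and> u ! i \<noteq> v ! i}"
  shows "mat_exp_entry (hcube_vertices k) (- \<i> * of_real (pi / 2)) (adj_matrix (subcube_edges k D)) v u
           = (- \<i>) ^ card D"
proof -
  define c where "c = - \<i> * of_real (pi / 2)"
  have "D \<subseteq> {..<k}" by (auto simp: D_def)
  then have "finite D" by (meson finite_lessThan finite_subset)
  have "exp c = - \<i>"
    using cis_minus_pi_half by (simp add: c_def cis_conv_exp)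
  moreover have "exp (- 2 * c) = -1"
    by (simp add: c_def)
  moreover have "c * (of_nat (card D) - 2 * of_nat m) = of_nat (card D) * c + of_nat m * (- 2 * c)" for m
    by (simp add: algebra_simps)
  ultimately have "exp (c * (of_nat (card D) - 2 * of_nat m)) = (- \<i>) ^ card D * (-1) ^ m" for m
    by (simp only: exp_add exp_of_nat_mult)
  moreover have "subcube_character k u D s v = (-1) ^ card s" if "s \<in> Pow D" for s
  proof -
    have "(\<Prod>j\<in>s. if v ! j = u ! j then 1 else -1 :: complex) = (\<Prod>j\<in>s. -1)"
      using that by (intro prod.cong) (auto simp: D_def)
    then show ?thesis
      using assms(2) by (simp add: subcube_character_def D_def)
  qed
  ultimately have "subcube_character k u D s v * exp (c * (of_nat (card D) - 2 * of_nat (card s)))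
                     = (- \<i>) ^ card D" if "s \<in> Pow D" for s
    using that by (simp flip: power_add mult.assoc)
  then show ?thesis
    unfolding c_def[symmetric] mat_exp_entry_subcube_edges[OF assms(1,2) \<open>D \<subseteq> {..<k}\<close>]
    using \<open>finite D\<close> by (simp add: card_Pow)
qed

theorem mainTheorem5:
  fixes k :: nat and u v :: "bool list"
  assumes "k \<ge> 1"
    and "u \<in> hcube_vertices k" and "v \<in> hcube_vertices k"
  shows "\<exists>E t0. spanning_subgraph_hcube k E \<and> t0 > 0 \<and> pst (hcube_vertices k) E u v t0"
proof -
  define D where "D = {i. i < k \<and> u ! i \<noteq> v ! i}"
  have "pst (hcube_vertices k) (subcube_edges k D) u v (pi / 2)"
    using subcube_edges_antipodal_transfer[OF assms(2,3)]
    by (simp add: pst_def D_def norm_power)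
  then show ?thesis
    using spanning_subgraph_subcube_edges pi_half_gt_zero by blast
qed

end
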